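(* Let $X\sim P_X$ be a discrete random variable on $\mathcal{X}$, let $M$ be a positive integer and $\gamma\ge1$. Then there exists an $M$-type distribution $P_{\hat X}$ (on $\mathcal{X}$, possibly augmented by one extra symbol $\mathtt{e}\notin\mathcal{X}$ to which $P_X$ assigns probability zero) such that $$E_\gamma(P_{\hat X}\|P_X)\le\Big[1-\frac\gamma2\,\mathbb{P}\big[\imath_X(X)\le\log(\gamma M)\big]\Big]^+.$$
   Context: A distribution $P$ on a discrete set is an $M$-type if every probability $P(x)$ is an integer multiple of $1/M$. $\imath_X(x):=\log\frac1{P_X(x)}$. $E_\gamma(P\|Q):=\sup_{\mathcal{A}}\{P(\mathcal{A})-\gamma Q(\mathcal{A})\}$. $[a]^+=\max\{a,0\}$. *)

theory Defs
  imports "HOL-Probability.Probability"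
begin

definition M_type :: "nat \<Rightarrow> 'b pmf \<Rightarrow> bool" where
  "M_type M P \<longleftrightarrow> (\<forall>x. \<exists>k::nat. pmf P x = real k / real M)"

definition info_dens :: "'a pmf \<Rightarrow> 'a \<Rightarrow> real" where
  "info_dens P x = ln (1 / pmf P x)"

definition E_gamma :: "real \<Rightarrow> 'b pmf \<Rightarrow> 'b pmf \<Rightarrow> real" where
  "E_gamma \<gamma> P Q = (SUP A. measure_pmf.prob P A - \<gamma> * measure_pmf.prob Q A)"

end

theory Submission
  imports Defs
begin

text \<open>Give every heavy symbol \<open>x\<close>, i.e. one with \<open>P(x) \<ge> 1/(\<gamma>M)\<close>, \<open>\<lfloor>\<gamma>M P(x)\<rfloor>\<close> atoms of mass
  \<open>1/M\<close> (at most \<open>M\<close> atoms in total) and put the remaining mass on the extra symbol \<open>None\<close>.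
  Then \<open>Q \<le> \<gamma> P\<close> on \<open>\<X>\<close>, so \<open>E\<^sub>\<gamma>(Q\<parallel>P) \<le> Q(None)\<close>; and since rounding down loses at
  most half of a weight \<open>\<ge> 1\<close>, the atoms carry mass at least \<open>\<gamma>/2 \<cdot> P(heavy)\<close>.\<close>

lemma finite_pmf_ge:
  fixes p :: "'a pmf"
  assumes "c > 0"
  shows "finite {x. c \<le> pmf p x}"
proof (rule ccontr)
  assume "infinite {x. c \<le> pmf p x}"
  obtain n :: nat where n: "1 / c < real n"
    using reals_Archimedean2 by blast
  obtain F where F: "F \<subseteq> {x. c \<le> pmf p x}" "finite F" "card F = n"
    using infinite_arbitrarily_large[OF \<open>infinite _\<close>] by blast
  have "real n * c = (\<Sum>x\<in>F. c)"
    using F by simp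
  also have "\<dots> \<le> (\<Sum>x\<in>F. pmf p x)"
    using F by (intro sum_mono) auto
  also have "\<dots> = measure_pmf.prob p F"
    using F by (simp add: measure_measure_pmf_finite)
  also have "\<dots> \<le> 1"
    by simp
  finally show False
    using n assms by (simp add: field_simps)
qed

lemma measure_pmf_image_le:
  fixes p :: "'a pmf" and q :: "'b pmf"
  assumes "inj f" "c \<ge> 0" "\<And>x. pmf q (f x) \<le> c * pmf p x"
  shows "measure_pmf.prob q (f ` B) \<le> c * measure_pmf.prob p B"
proof -
  have "emeasure q (f ` B) = (\<integral>\<^sup>+x. pmf q (f x) \<partial>count_space B)"
    using assms(1) by (simp add: nn_integral_pmf' inj_on_subset)
  also have "\<dots> \<le> (\<integral>\<^sup>+x. ennreal c * pmf p x \<partial>count_space B)"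
    using assms(2,3) by (intro nn_integral_mono) (simp add: ennreal_mult[symmetric])
  also have "\<dots> = ennreal c * emeasure p B"
    by (simp add: nn_integral_cmult nn_integral_pmf)
  finally show ?thesis
    using assms(2) by (simp add: measure_pmf.emeasure_eq_measure ennreal_mult[symmetric])
qed

lemma E_gamma_le_pmf_None:
  fixes P :: "'a pmf" and Q :: "'a option pmf"
  assumes "\<gamma> \<ge> 0" "\<And>x. pmf Q (Some x) \<le> \<gamma> * pmf P x"
  shows "E_gamma \<gamma> Q (map_pmf Some P) \<le> pmf Q None"
  unfolding E_gamma_def
proof (rule cSUP_least)
  fix A :: "'a option set"
  define B where "B = Some -` A"
  have "A \<subseteq> insert None (Some ` B)"
    unfolding B_def by (auto elim: option.exhaust_sel)
  then have "measure_pmf.prob Q A \<le> measure_pmf.prob Q (insert None (Some ` B))"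
    by (rule measure_pmf.finite_measure_mono) simp
  also have "\<dots> = pmf Q None + measure_pmf.prob Q (Some ` B)"
    using measure_pmf.finite_measure_Union[of "{None}" Q "Some ` B"]
    by (simp add: measure_pmf_single)
  also have "\<dots> \<le> pmf Q None + \<gamma> * measure_pmf.prob P B"
    using assms by (simp add: measure_pmf_image_le)
  finally show "measure_pmf.prob Q A - \<gamma> * measure_pmf.prob (map_pmf Some P) A \<le> pmf Q None"
    unfolding B_def by simp
qed simp

lemma exists_submultiset_size:
  "m \<le> size N \<Longrightarrow> \<exists>K. K \<subseteq># N \<and> size K = m"
proof (induction N arbitrary: m)
  case empty
  then show ?case by auto
next
  case (add x N)
  show ?case
  proof (cases "m \<le> size N")
    case True
    then obtain K where "K \<subseteq># N" "size K = m"
      using add.IH by blast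
    then show ?thesis
      by (metis mset_subset_eq_add_left add_mset_add_single subset_mset.order_trans)
  next
    case False
    then show ?thesis
      using add.prems by (intro exI[of _ "add_mset x N"]) simp
  qed
qed

lemma M_type_pmf_of_multiset:
  assumes "size K = M" "M \<ge> 1"
  shows "M_type M (pmf_of_multiset K)"
proof -
  have "K \<noteq> {#}"
    using assms by auto
  then show ?thesis
    unfolding M_type_def using assms(1) by simp
qed

lemma exists_M_type_below_multiset:
  fixes N :: "'a multiset"
  assumes "M \<ge> 1"
  shows "\<exists>Q :: 'a option pmf. M_type M Q
    \<and> (\<forall>x. pmf Q (Some x) \<le> real (count N x) / real M)
    \<and> pmf Q None \<le> max 0 (1 - real (size N) / real M)"
proof -
  define m where "m = min M (size N)"
  obtain K0 where K0: "K0 \<subseteq># N" "size K0 = m"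
    using exists_submultiset_size[of m N] unfolding m_def by auto
  define K where "K = image_mset Some K0 + replicate_mset (M - m) None"
  have size_K: "size K = M"
    unfolding K_def using K0(2) by (simp add: m_def)
  have K_nonempty: "K \<noteq> {#}"
    using size_K assms by auto
  define Q where "Q = pmf_of_multiset K"
  have pmf_Q: "pmf Q y = real (count K y) / real M" for y
    unfolding Q_def using K_nonempty size_K by simp
  have "count K (Some x) = count K0 x" for x
  proof -
    have "Some -` {Some x} = {x}"
      by auto
    then show ?thesis
      unfolding K_def by (simp add: count_image_mset Int_insert_left not_in_iff)
  qed
  then have "pmf Q (Some x) \<le> real (count N x) / real M" for x
    unfolding pmf_Q using K0(1) by (simp add: divide_right_mono mset_subset_eq_count)
  moreover have "pmf Q None \<le> max 0 (1 - real (size N) / real M)"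
  proof -
    have "count K None = M - m"
      unfolding K_def by (auto simp: count_image_mset)
    then show ?thesis
      unfolding pmf_Q m_def using assms by (cases "size N \<le> M") (auto simp: of_nat_diff diff_divide_distrib)
  qed
  ultimately show ?thesis
    using M_type_pmf_of_multiset[OF size_K assms] unfolding Q_def by blast
qed

lemma nat_floor_ge_half:
  assumes "(t::real) \<ge> 1"
  shows "t / 2 \<le> real (nat \<lfloor>t\<rfloor>)"
proof (cases "t \<ge> 2")
  case True
  then show ?thesis
    using floor_correct[of t] by linarith
next
  case False
  then have "\<lfloor>t\<rfloor> = 1"
    using assms by (simp add: floor_eq_iff)
  then show ?thesis
    using False by simp
qed

lemma exists_multiset_floor:
  fixes f :: "'a \<Rightarrow> real"
  assumes "finite S" "\<And>x. f x \<ge> 0" "\<And>x. x \<in> S \<Longrightarrow> f x \<ge> 1"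
  obtains N where "\<And>x. real (count N x) \<le> f x" "(\<Sum>x\<in>S. f x) / 2 \<le> real (size N)"
proof
  define N where "N = (\<Sum>x\<in>S. replicate_mset (nat \<lfloor>f x\<rfloor>) x)"
  have "count N x = (if x \<in> S then nat \<lfloor>f x\<rfloor> else 0)" for x
    unfolding N_def count_sum using assms(1)
    by (simp add: count_replicate_mset if_distrib sum.delta cong: if_cong)
  then show "real (count N x) \<le> f x" for x
    using assms(2)[of x] by simp
  have "(\<Sum>x\<in>S. f x) / 2 \<le> (\<Sum>x\<in>S. real (nat \<lfloor>f x\<rfloor>))"
    unfolding sum_divide_distrib using assms(3) by (intro sum_mono nat_floor_ge_half)
  then show "(\<Sum>x\<in>S. f x) / 2 \<le> real (size N)"
    unfolding N_def by simp
qed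

text \<open>Outside the support \<open>info_dens\<close> is \<open>ln (1/0) = 0\<close>, which is why only the probabilities agree.\<close>
lemma prob_info_dens_le:
  fixes P :: "'a pmf"
  assumes "t > 0"
  shows "measure_pmf.prob P {x. info_dens P x \<le> ln t} = measure_pmf.prob P {x. 1 / t \<le> pmf P x}"
proof -
  have "{x. info_dens P x \<le> ln t} \<inter> set_pmf P = {x. 1 / t \<le> pmf P x} \<inter> set_pmf P"
    using assms by (auto simp: info_dens_def set_pmf_iff field_simps)
  then show ?thesis
    by (metis measure_Int_set_pmf)
qed

theorem mainTheorem5:
  fixes PX :: "'a pmf" and M :: nat and \<gamma> :: real
  assumes "M \<ge> 1" and "\<gamma> \<ge> 1"
  shows "\<exists>Q :: 'a option pmf. M_type M Q \<and>
    E_gamma \<gamma> Q (map_pmf Some PX)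
      \<le> max 0 (1 - \<gamma> / 2 * measure_pmf.prob PX {x. info_dens PX x \<le> ln (\<gamma> * real M)})"
proof -
  define t where "t = \<gamma> * real M"
  have t: "t \<ge> 1" "real M > 0"
    unfolding t_def using assms mult_mono[of 1 \<gamma> 1 "real M"] by auto
  define S where "S = {x. 1 / t \<le> pmf PX x}"
  have "finite S"
    unfolding S_def using t by (intro finite_pmf_ge) simp
  then obtain N where N: "\<And>x. real (count N x) \<le> t * pmf PX x"
    "(\<Sum>x\<in>S. t * pmf PX x) / 2 \<le> real (size N)"
    by (rule exists_multiset_floor) (use t in \<open>auto simp: S_def field_simps\<close>)
  obtain Q :: "'a option pmf" where Q: "M_type M Q"
    "\<And>x. pmf Q (Some x) \<le> real (count N x) / real M"
    "pmf Q None \<le> max 0 (1 - real (size N) / real M)"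
    using exists_M_type_below_multiset[OF assms(1), of N] by blast
  have "pmf Q (Some x) \<le> \<gamma> * pmf PX x" for x
  proof -
    have "pmf Q (Some x) \<le> t * pmf PX x / real M"
      using Q(2)[of x] N(1)[of x] t(2) by (meson divide_right_mono of_nat_0_le_iff order_trans)
    then show ?thesis
      using t(2) unfolding t_def by simp
  qed
  then have "E_gamma \<gamma> Q (map_pmf Some PX) \<le> pmf Q None"
    using assms(2) by (intro E_gamma_le_pmf_None) auto
  also have "\<dots> \<le> max 0 (1 - real (size N) / real M)"
    by (rule Q(3))
  also have "\<dots> \<le> max 0 (1 - \<gamma> / 2 * measure_pmf.prob PX S)"
    using N(2) t(2) \<open>finite S\<close>
    by (intro max.mono) (simp_all add: measure_measure_pmf_finite sum_distrib_left[symmetric] t_def field_simps)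
  also have "measure_pmf.prob PX S = measure_pmf.prob PX {x. info_dens PX x \<le> ln t}"
    unfolding S_def using t by (intro prob_info_dens_le[symmetric]) simp
  finally show ?thesis
    using Q(1) unfolding t_def by blast
qed

end
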